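(* Let $\phi$ be a continuous flow on a compact metric space $X$, and let $Exp(\phi)$ be the set of uniformly-expansive points of $\phi$. Then $Exp(\phi)$ is invariant: $\phi^t(Exp(\phi))\subset Exp(\phi)$ for every $t\in\mathbb{R}$.
   Context: A continuous flow is a continuous map $\phi:\mathbb{R}\times X\to X$, $\phi^t(x)=\phi(t,x)$, with $\phi^0=\mathrm{id}$, $\phi^{t+s}=\phi^s\circ\phi^t$; $O(x)=\{\phi^t(x):t\in\mathbb{R}\}$. A reparametrization is an increasing homeomorphism $h:\mathbb{R}\to\mathbb{R}$ with $h(0)=0$. A point $x$ is uniformly-expansive if there is a neighborhood $U$ of $x$ such that for every $\varepsilon>0$ there is $\delta>0$ such that whenever $y,z\in U$ and some reparametrization $h$ satisfies $d(\phi^t(y),\phi^{h(t)}(z))<\delta$ for all $t\in\mathbb{R}$, then $y=\phi^s(w)$ with $w\in O(z)$ and $|s|<\varepsilon$. *)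

theory Defs
  imports "HOL-Analysis.Analysis"
begin

definition continuous_flow :: "'a::metric_space set \<Rightarrow> (real \<Rightarrow> 'a \<Rightarrow> 'a) \<Rightarrow> bool" where
  "continuous_flow X \<phi> \<longleftrightarrow>
     continuous_on (UNIV \<times> X) (\<lambda>(t, x). \<phi> t x) \<and>
     (\<forall>t. \<forall>x\<in>X. \<phi> t x \<in> X) \<and>
     (\<forall>x\<in>X. \<phi> 0 x = x) \<and>
     (\<forall>t s. \<forall>x\<in>X. \<phi> (t + s) x = \<phi> s (\<phi> t x))"

definition orbit :: "(real \<Rightarrow> 'a \<Rightarrow> 'a) \<Rightarrow> 'a \<Rightarrow> 'a set" where
  "orbit \<phi> x = {\<phi> t x | t. t \<in> (UNIV::real set)}"

definition reparametrization :: "(real \<Rightarrow> real) \<Rightarrow> bool" where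
  "reparametrization h \<longleftrightarrow> strict_mono h \<and> homeomorphism UNIV UNIV h (inv h) \<and> h 0 = 0"

definition uniformly_expansive_point ::
  "'a::metric_space set \<Rightarrow> (real \<Rightarrow> 'a \<Rightarrow> 'a) \<Rightarrow> 'a \<Rightarrow> bool" where
  "uniformly_expansive_point X \<phi> x \<longleftrightarrow> x \<in> X \<and>
     (\<exists>U. U \<subseteq> X \<and> (\<exists>V. openin (top_of_set X) V \<and> x \<in> V \<and> V \<subseteq> U) \<and>
       (\<forall>\<epsilon>>0. \<exists>\<delta>>0. \<forall>y\<in>U. \<forall>z\<in>U. \<forall>h.
          reparametrization h \<and> (\<forall>t. dist (\<phi> t y) (\<phi> (h t) z) < \<delta>) \<longrightarrow>
          (\<exists>s w. w \<in> orbit \<phi> z \<and> \<bar>s\<bar> < \<epsilon> \<and> y = \<phi> s w)))"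

definition Exp :: "'a::metric_space set \<Rightarrow> (real \<Rightarrow> 'a \<Rightarrow> 'a) \<Rightarrow> 'a set" where
  "Exp X \<phi> = {x. uniformly_expansive_point X \<phi> x}"

end

(* Transport the expansiveness of x along the flow.  If the orbits of y' and z' near
   \<phi> T x stay \<delta>-close under a reparametrization h, then the orbits of \<phi> (-T) y' and
   \<phi> (h (-T)) z' stay \<delta>-close under h shifted by -T, which is again a reparametrization,
   and closeness at time -T puts both points near x.  Expansiveness at x then puts
   \<phi> (-T) y' on the orbit of \<phi> (h (-T)) z', hence y' on the orbit of z'. *)

theory Submission
  imports Defs
begin

lemma continuous_flowD:
  assumes "continuous_flow X \<phi>" and "x \<in> X"
  shows continuous_flow_in: "\<phi> t x \<in> X"
    and continuous_flow_zero: "\<phi> 0 x = x"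
    and continuous_flow_add: "\<phi> s (\<phi> t x) = \<phi> (t + s) x"
  using assms unfolding continuous_flow_def by auto

lemma continuous_flow_inverse:
  assumes "continuous_flow X \<phi>" and "x \<in> X"
  shows "\<phi> t (\<phi> (- t) x) = x"
  using assms by (simp add: continuous_flow_add continuous_flow_zero)

lemma continuous_on_flow_time:
  assumes "continuous_flow X \<phi>"
  shows "continuous_on X (\<phi> t)"
proof -
  have "continuous_on (UNIV \<times> X) (\<lambda>(t, x). \<phi> t x)"
    using assms unfolding continuous_flow_def by simp
  then have "continuous_on X (\<lambda>x. (\<lambda>(t, x). \<phi> t x) (t, x))"
    by (rule continuous_on_compose2) (auto intro: continuous_intros)
  then show ?thesis by simp
qed

lemma flow_mem_orbit:
  assumes "continuous_flow X \<phi>" and "z \<in> X" and "y \<in> orbit \<phi> (\<phi> b z)"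
  shows "\<phi> a y \<in> orbit \<phi> z"
proof -
  from assms(3) obtain q where "y = \<phi> q (\<phi> b z)" unfolding orbit_def by auto
  then have "\<phi> a y = \<phi> (b + q + a) z"
    using assms(1,2) by (simp add: continuous_flow_add continuous_flow_in)
  then show ?thesis unfolding orbit_def by auto
qed

lemma near_orbit_iff_mem_orbit:
  assumes "continuous_flow X \<phi>" and "y \<in> X" and "z \<in> X" and "\<epsilon> > 0"
  shows "(\<exists>s w. w \<in> orbit \<phi> z \<and> \<bar>s\<bar> < \<epsilon> \<and> y = \<phi> s w) \<longleftrightarrow> y \<in> orbit \<phi> z"
proof
  assume "\<exists>s w. w \<in> orbit \<phi> z \<and> \<bar>s\<bar> < \<epsilon> \<and> y = \<phi> s w"
  then obtain s q where "y = \<phi> s (\<phi> q (\<phi> 0 z))"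
    using assms(1,3) unfolding orbit_def by (auto simp: continuous_flow_zero)
  then show "y \<in> orbit \<phi> z"
    using flow_mem_orbit[OF assms(1,3)] unfolding orbit_def by blast
next
  assume "y \<in> orbit \<phi> z"
  then show "\<exists>s w. w \<in> orbit \<phi> z \<and> \<bar>s\<bar> < \<epsilon> \<and> y = \<phi> s w"
    using assms by (intro exI[of _ 0] exI[of _ y]) (simp add: continuous_flow_zero)
qed

text \<open>Since the definition allows \<open>s = 0\<close>, its \<open>\<epsilon>\<close> is immaterial: the conclusion
  only says that \<open>y\<close> lies on the orbit of \<open>z\<close>.\<close>

lemma uniformly_expansive_point_iff:
  assumes "continuous_flow X \<phi>"
  shows "uniformly_expansive_point X \<phi> x \<longleftrightarrow> x \<in> X \<and>
    (\<exists>U \<subseteq> X. (\<exists>V. openin (top_of_set X) V \<and> x \<in> V \<and> V \<subseteq> U) \<and>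
      (\<exists>\<delta>>0. \<forall>y\<in>U. \<forall>z\<in>U. \<forall>h.
          reparametrization h \<and> (\<forall>t. dist (\<phi> t y) (\<phi> (h t) z) < \<delta>) \<longrightarrow> y \<in> orbit \<phi> z))"
proof -
  have "(\<forall>y\<in>U. \<forall>z\<in>U. \<forall>h.
          reparametrization h \<and> (\<forall>t. dist (\<phi> t y) (\<phi> (h t) z) < \<delta>) \<longrightarrow>
          (\<exists>s w. w \<in> orbit \<phi> z \<and> \<bar>s\<bar> < \<epsilon> \<and> y = \<phi> s w)) \<longleftrightarrow>
        (\<forall>y\<in>U. \<forall>z\<in>U. \<forall>h.
          reparametrization h \<and> (\<forall>t. dist (\<phi> t y) (\<phi> (h t) z) < \<delta>) \<longrightarrow> y \<in> orbit \<phi> z)"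
    if "U \<subseteq> X" and "\<epsilon> > 0" for U \<epsilon> \<delta>
    using near_orbit_iff_mem_orbit[OF assms _ _ \<open>\<epsilon> > 0\<close>] \<open>U \<subseteq> X\<close> by blast
  then have "(\<forall>\<epsilon>>0. \<exists>\<delta>>0. \<forall>y\<in>U. \<forall>z\<in>U. \<forall>h.
          reparametrization h \<and> (\<forall>t. dist (\<phi> t y) (\<phi> (h t) z) < \<delta>) \<longrightarrow>
          (\<exists>s w. w \<in> orbit \<phi> z \<and> \<bar>s\<bar> < \<epsilon> \<and> y = \<phi> s w)) \<longleftrightarrow>
        (\<exists>\<delta>>0. \<forall>y\<in>U. \<forall>z\<in>U. \<forall>h.
          reparametrization h \<and> (\<forall>t. dist (\<phi> t y) (\<phi> (h t) z) < \<delta>) \<longrightarrow> y \<in> orbit \<phi> z)"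
    if "U \<subseteq> X" for U
    using that by (simp cong: conj_cong) (use zero_less_one in blast)
  then show ?thesis
    unfolding uniformly_expansive_point_def by (simp cong: conj_cong)
qed

lemma reparametrization_shift:
  assumes "reparametrization h"
  shows "reparametrization (\<lambda>s. h (s + a) - h a)"
proof -
  let ?g = "\<lambda>s. h (s + a) - h a" and ?k = "\<lambda>u. inv h (u + h a) - a"
  have "strict_mono h" and "homeomorphism UNIV UNIV h (inv h)"
    using assms unfolding reparametrization_def by auto
  then have mono: "strict_mono ?g"
    and h_inv: "\<And>u. h (inv h u) = u" and inv_h: "\<And>x. inv h (h x) = x"
    and cont_h: "continuous_on UNIV h" and cont_inv: "continuous_on UNIV (inv h)"
    unfolding strict_mono_def homeomorphism_def by auto
  have gk: "\<And>u. ?g (?k u) = u" and kg: "\<And>s. ?k (?g s) = s"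
    using h_inv inv_h by simp_all
  have "homeomorphism UNIV UNIV ?g ?k"
  proof (rule homeomorphismI)
    show "continuous_on UNIV ?g"
      by (intro continuous_intros continuous_on_compose2[OF cont_h]) auto
    show "continuous_on UNIV ?k"
      by (intro continuous_intros continuous_on_compose2[OF cont_inv]) auto
  qed (use gk kg in \<open>auto intro: image_eqI[where x = "?k _"] image_eqI[where x = "?g _"]\<close>)
  moreover have "inv ?g = ?k"
    by (rule inv_equality) (use gk kg in auto)
  ultimately show ?thesis
    unfolding reparametrization_def using mono by simp
qed

lemma flow_tracking_shift:
  assumes "continuous_flow X \<phi>" and "y \<in> X" and "z \<in> X"
    and "\<forall>t. dist (\<phi> t y) (\<phi> (h t) z) < \<delta>"
  shows "dist (\<phi> s (\<phi> a y)) (\<phi> (h (s + a) - h a) (\<phi> (h a) z)) < \<delta>"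
  using assms by (simp add: continuous_flow_add add.commute)

lemma uniformly_expansive_point_flow:
  assumes flow: "continuous_flow X \<phi>" and "uniformly_expansive_point X \<phi> x"
  shows "uniformly_expansive_point X \<phi> (\<phi> T x)"
proof -
  obtain U V \<delta> where "x \<in> X" "U \<subseteq> X" "openin (top_of_set X) V" "x \<in> V" "V \<subseteq> U" "\<delta> > 0"
    and expansive: "\<And>y z h. y \<in> U \<Longrightarrow> z \<in> U \<Longrightarrow> reparametrization h \<Longrightarrow>
        \<forall>t. dist (\<phi> t y) (\<phi> (h t) z) < \<delta> \<Longrightarrow> y \<in> orbit \<phi> z"
    using assms uniformly_expansive_point_iff by metis
  then obtain e where "e > 0" and ball_U: "\<And>q. q \<in> X \<Longrightarrow> dist q x < e \<Longrightarrow> q \<in> U"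
    unfolding openin_euclidean_subtopology_iff by blast
  define r where "r = e / 2"
  define U' where "U' = X \<inter> \<phi> (- T) -` ball x r"
  have "r > 0" using \<open>e > 0\<close> by (simp add: r_def)
  have "openin (top_of_set X) U'"
    unfolding U'_def by (rule continuous_openin_preimage_gen[OF continuous_on_flow_time[OF flow]]) simp
  moreover have "\<phi> T x \<in> U'"
    using \<open>x \<in> X\<close> \<open>r > 0\<close> flow
    by (simp add: U'_def continuous_flow_in continuous_flow_add continuous_flow_zero)
  moreover have "y' \<in> orbit \<phi> z'"
    if "y' \<in> U'" "z' \<in> U'" "reparametrization h"
      and close: "\<forall>t. dist (\<phi> t y') (\<phi> (h t) z') < min \<delta> r" for y' z' h
  proof -
    have "y' \<in> X" "z' \<in> X" using that by (auto simp: U'_def)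
    define y where "y = \<phi> (- T) y'"
    define z where "z = \<phi> (h (- T)) z'"
    have "y \<in> X" "z \<in> X"
      using \<open>y' \<in> X\<close> \<open>z' \<in> X\<close> flow by (simp_all add: y_def z_def continuous_flow_in)
    have "dist y x < r" using \<open>y' \<in> U'\<close> by (simp add: U'_def y_def dist_commute)
    moreover have "dist y z < r" using close[rule_format, of "- T"] by (simp add: y_def z_def)
    ultimately have "dist z x < e"
      using dist_triangle[of z x y] by (simp add: r_def dist_commute)
    then have "y \<in> U" "z \<in> U"
      using ball_U \<open>y \<in> X\<close> \<open>z \<in> X\<close> \<open>dist y x < r\<close> \<open>r > 0\<close> by (auto simp: r_def)
    moreover have "reparametrization (\<lambda>s. h (s - T) - h (- T))"
      using reparametrization_shift[OF \<open>reparametrization h\<close>, of "- T"] by simp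
    moreover have "\<forall>s. dist (\<phi> s y) (\<phi> (h (s - T) - h (- T)) z) < \<delta>"
    proof
      fix s
      have "\<forall>t. dist (\<phi> t y') (\<phi> (h t) z') < \<delta>" using close by simp
      from flow_tracking_shift[OF flow \<open>y' \<in> X\<close> \<open>z' \<in> X\<close> this, of s "- T"]
      show "dist (\<phi> s y) (\<phi> (h (s - T) - h (- T)) z) < \<delta>" by (simp add: y_def z_def)
    qed
    ultimately have "y \<in> orbit \<phi> (\<phi> (h (- T)) z')"
      unfolding z_def by (rule expansive)
    then have "\<phi> T y \<in> orbit \<phi> z'"
      by (rule flow_mem_orbit[OF flow \<open>z' \<in> X\<close>])
    then show ?thesis
      using continuous_flow_inverse[OF flow \<open>y' \<in> X\<close>] by (simp add: y_def)
  qed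
  ultimately show ?thesis
    unfolding uniformly_expansive_point_iff[OF flow]
    using \<open>x \<in> X\<close> \<open>\<delta> > 0\<close> \<open>r > 0\<close> flow
    by (intro conjI exI[of _ U'] exI[of _ "min \<delta> r"])
       (auto simp: U'_def continuous_flow_in)
qed

theorem mainTheorem4:
  fixes X :: "'a::metric_space set" and \<phi> :: "real \<Rightarrow> 'a \<Rightarrow> 'a"
  assumes "compact X" and "continuous_flow X \<phi>"
  shows "\<forall>t. \<phi> t ` Exp X \<phi> \<subseteq> Exp X \<phi>"
  using uniformly_expansive_point_flow[OF assms(2)] by (auto simp: Exp_def)

end
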